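(* Let $\mathcal H$ be a finite-dimensional Hilbert space, $L\in\mathbb N$, and $P_1,\dots,P_L$ orthogonal projections on $\mathcal H$ such that $[P_i,P_j]\ne0$ implies $|i-j|=1$ or $\{i,j\}=\{1,L\}$. Fix $1<n<L$, identify indices cyclically ($i\equiv i+L$), and set $H_L=\sum_{i=1}^LP_i$ and $H_{n,k}=\sum_{i=k}^{n+k-1}P_i$ for $k=1,\dots,L$. Assume $\ker H_L\ne\{0\}$. Then $$\operatorname{gap}(H_L)\ge\frac{n}{n-1}\Big(\min_{1\le k\le L}\operatorname{gap}(H_{n,k})-\frac1n\Big).$$
   Context: For a nonnegative self-adjoint operator $H$ on a finite-dimensional Hilbert space with nontrivial kernel, $\operatorname{gap}(H)=\inf\{\langle\psi,H\psi\rangle:\psi\in(\ker H)^\perp,\|\psi\|=1\}$. *)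

theory Defs
  imports "Jordan_Normal_Form.Schur_Decomposition" "HOL-Library.Extended_Real"
begin

text \<open>The finite-dimensional Hilbert space is modelled as complex d-space (vectors in carrier_vec d),
with inner product  <psi, phi> = phi \<bullet>c psi  (antilinear in the first argument).\<close>

definition cinner :: "complex vec \<Rightarrow> complex vec \<Rightarrow> complex" where
  "cinner \<psi> \<phi> = \<phi> \<bullet>c \<psi>"

definition orth_proj :: "nat \<Rightarrow> complex mat \<Rightarrow> bool" where
  "orth_proj d P \<longleftrightarrow> P \<in> carrier_mat d d \<and> P * P = P \<and> mat_adjoint P = P"

definition kernel :: "nat \<Rightarrow> complex mat \<Rightarrow> complex vec set" where
  "kernel d H = {v \<in> carrier_vec d. H *\<^sub>v v = 0\<^sub>v d}"

definition orth_compl :: "nat \<Rightarrow> complex vec set \<Rightarrow> complex vec set" where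
  "orth_compl d S = {\<psi> \<in> carrier_vec d. \<forall>v\<in>S. cinner \<psi> v = 0}"

text \<open>Spectral gap; Inf of the empty set is +infinity (only relevant when H = 0).
  For self-adjoint H the quadratic form is real, so taking Re loses nothing.\<close>
definition gap :: "nat \<Rightarrow> complex mat \<Rightarrow> ereal" where
  "gap d H = Inf {ereal (Re (cinner \<psi> (H *\<^sub>v \<psi>))) | \<psi>.
                  \<psi> \<in> orth_compl d (kernel d H) \<and> cinner \<psi> \<psi> = 1}"

definition opsum :: "nat \<Rightarrow> (nat \<Rightarrow> complex mat) \<Rightarrow> nat set \<Rightarrow> complex mat" where
  "opsum d F I = mat d d (\<lambda>(a, b). \<Sum>i\<in>I. F i $$ (a, b))"

text \<open>Cyclic identification of indices i == i + L, representatives in {1..L}.\<close>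
definition cyc :: "nat \<Rightarrow> nat \<Rightarrow> nat" where
  "cyc L i = (i + L - 1) mod L + 1"

end

theory Submission
  imports "Jordan_Normal_Form.Matrix_Kernel" Defs
begin

text \<open>For a positive semidefinite Hermitian H, the bound gap H \<ge> c is equivalent to the
  operator inequality H^2 \<ge> c H; both directions rest on the decomposition of the space
  into the range and the kernel of H. Write H_k for the window Hamiltonians. Every site lies
  in exactly n of the L cyclic windows, two distinct sites share at most n - 1 windows, and
  non-commuting neighbours share exactly n - 1. Since Re <P_a \<phi>, P_b \<phi>> \<ge> 0 for commuting
  projections, expanding the squares gives \<Sum>_k H_k^2 \<le> (n - 1) H^2 + H, while
  \<Sum>_k H_k = n H. If every H_k has gap at least \<gamma>, this yields
  \<gamma> n H \<le> \<Sum>_k H_k^2 \<le> (n - 1) H^2 + H, that is H^2 \<ge> (n \<gamma> - 1) / (n - 1) H.\<close>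

section \<open>The inner product on complex d-space\<close>

lemma cinner_eq_sum:
  assumes "x \<in> carrier_vec d" "y \<in> carrier_vec d"
  shows "cinner x y = (\<Sum>i<d. y $ i * cnj (x $ i))"
  using assms unfolding cinner_def scalar_prod_def by (auto intro!: sum.cong)

lemma cinner_add_left:
  assumes "x \<in> carrier_vec d" "y \<in> carrier_vec d" "z \<in> carrier_vec d"
  shows "cinner (x + y) z = cinner x z + cinner y z"
  using assms by (simp add: cinner_eq_sum[of "x + y" d z] cinner_eq_sum[of x d z]
      cinner_eq_sum[of y d z] ring_distribs sum.distrib)

lemma cinner_add_right:
  assumes "x \<in> carrier_vec d" "y \<in> carrier_vec d" "z \<in> carrier_vec d"
  shows "cinner z (x + y) = cinner z x + cinner z y"
  using assms by (simp add: cinner_eq_sum ring_distribs sum.distrib)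

lemma cinner_smult_left:
  assumes "x \<in> carrier_vec d" "y \<in> carrier_vec d"
  shows "cinner (a \<cdot>\<^sub>v x) y = cnj a * cinner x y"
  using assms by (simp add: cinner_eq_sum[of "a \<cdot>\<^sub>v x" d y] cinner_eq_sum[of x d y]
      sum_distrib_left ac_simps)

lemma cinner_smult_right:
  assumes "x \<in> carrier_vec d" "y \<in> carrier_vec d"
  shows "cinner x (a \<cdot>\<^sub>v y) = a * cinner x y"
  using assms by (simp add: cinner_eq_sum sum_distrib_left ac_simps)

lemma cinner_commute:
  assumes "x \<in> carrier_vec d" "y \<in> carrier_vec d"
  shows "cinner y x = cnj (cinner x y)"
  using assms by (simp add: cinner_eq_sum mult.commute)

lemma cinner_zero_left: "x \<in> carrier_vec d \<Longrightarrow> cinner (0\<^sub>v d) x = 0"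
  by (simp add: cinner_eq_sum[of "0\<^sub>v d" d x])

lemma cinner_zero_right: "x \<in> carrier_vec d \<Longrightarrow> cinner x (0\<^sub>v d) = 0"
  by (simp add: cinner_eq_sum)

lemma cinner_sum_right:
  assumes x: "x \<in> carrier_vec d" and y: "y \<in> carrier_vec d"
    and g: "\<And>j. j \<in> J \<Longrightarrow> g j \<in> carrier_vec d"
    and y_eq: "\<And>i. i < d \<Longrightarrow> y $ i = (\<Sum>j\<in>J. g j $ i)"
  shows "cinner x y = (\<Sum>j\<in>J. cinner x (g j))"
proof -
  have "cinner x y = (\<Sum>i<d. \<Sum>j\<in>J. g j $ i * cnj (x $ i))"
    unfolding cinner_eq_sum[OF x y] by (simp add: y_eq sum_distrib_right)
  also have "\<dots> = (\<Sum>j\<in>J. cinner x (g j))"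
    by (subst sum.swap) (simp add: cinner_eq_sum[OF x g])
  finally show ?thesis .
qed

lemma cinner_sum_left:
  assumes x: "x \<in> carrier_vec d" and y: "y \<in> carrier_vec d"
    and g: "\<And>j. j \<in> J \<Longrightarrow> g j \<in> carrier_vec d"
    and x_eq: "\<And>i. i < d \<Longrightarrow> x $ i = (\<Sum>j\<in>J. g j $ i)"
  shows "cinner x y = (\<Sum>j\<in>J. cinner (g j) y)"
  using cinner_sum_right[OF y x g x_eq] cinner_commute[OF y x] cinner_commute[OF y g]
  by simp

definition sqnorm :: "complex vec \<Rightarrow> real" where
  "sqnorm v = Re (cinner v v)"

lemma cinner_self_eq_sqnorm: "cinner x x = complex_of_real (sqnorm x)"
  using conjugate_square_ge_0_vec[of x]
  unfolding sqnorm_def cinner_def less_eq_complex_def by (simp add: complex_eq_iff)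

lemma sqnorm_nonneg: "0 \<le> sqnorm x"
  using conjugate_square_ge_0_vec[of x] unfolding sqnorm_def cinner_def less_eq_complex_def
  by simp

lemma sqnorm_eq_0_iff: "x \<in> carrier_vec d \<Longrightarrow> sqnorm x = 0 \<longleftrightarrow> x = 0\<^sub>v d"
  using cinner_self_eq_sqnorm[of x] conjugate_square_eq_0_vec[of x d]
  unfolding cinner_def by auto

lemma mult_mat_vec_index_sum:
  assumes "H \<in> carrier_mat d d" "v \<in> carrier_vec d" "i < d"
  shows "(H *\<^sub>v v) $ i = (\<Sum>j<d. H $$ (i, j) * v $ j)"
  using assms by (auto simp: scalar_prod_def row_def intro!: sum.cong)

section \<open>Hermitian matrices and the range-kernel decomposition\<close>

definition hermitian :: "nat \<Rightarrow> complex mat \<Rightarrow> bool" where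
  "hermitian d H \<longleftrightarrow> H \<in> carrier_mat d d \<and> (\<forall>i<d. \<forall>j<d. H $$ (i, j) = cnj (H $$ (j, i)))"

lemma hermitian_carrier: "hermitian d H \<Longrightarrow> H \<in> carrier_mat d d"
  unfolding hermitian_def by blast

lemma orth_proj_hermitian:
  assumes "orth_proj d P"
  shows "hermitian d P"
proof -
  have P: "P \<in> carrier_mat d d" and adj: "mat_adjoint P = P"
    using assms unfolding orth_proj_def by auto
  have "P $$ (i, j) = cnj (P $$ (j, i))" if "i < d" "j < d" for i j
    using arg_cong[OF adj, of "\<lambda>M. M $$ (i, j)"] P that
    unfolding mat_adjoint_def by (simp add: mat_of_rows_def)
  then show ?thesis using P unfolding hermitian_def by blast
qed

lemma hermitian_cinner_mult:
  assumes H: "hermitian d H" and u: "u \<in> carrier_vec d" and v: "v \<in> carrier_vec d"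
  shows "cinner u (H *\<^sub>v v) = cinner (H *\<^sub>v u) v"
proof -
  have Hc: "H \<in> carrier_mat d d"
    using H by (rule hermitian_carrier)
  have H_entry: "\<And>i j. i < d \<Longrightarrow> j < d \<Longrightarrow> cnj (H $$ (j, i)) = H $$ (i, j)"
    using H unfolding hermitian_def by metis
  have "cinner u (H *\<^sub>v v) = (\<Sum>i<d. \<Sum>j<d. H $$ (i, j) * v $ j * cnj (u $ i))"
    using Hc u v by (simp add: cinner_eq_sum mult_mat_vec_index_sum sum_distrib_right
        del: index_mult_mat_vec)
  also have "\<dots> = (\<Sum>j<d. v $ j * cnj (\<Sum>i<d. H $$ (j, i) * u $ i))"
    by (subst sum.swap) (simp add: sum_distrib_left H_entry ac_simps)
  also have "\<dots> = cinner (H *\<^sub>v u) v"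
    using Hc u v by (simp add: cinner_eq_sum[of "H *\<^sub>v u" d v] mult_mat_vec_index_sum
        del: index_mult_mat_vec)
  finally show ?thesis .
qed

lemma orthogonal_mat_kernel_if_orthogonal_basis:
  assumes H: "H \<in> carrier_mat d d" and v: "v \<in> carrier_vec d" and B: "kernel.basis d H B"
    and orth: "\<And>u. u \<in> B \<Longrightarrow> cinner u v = 0"
  shows "\<forall>x \<in> mat_kernel H. cinner x v = 0"
proof -
  interpret kernel d d H by unfold_locales (rule H)
  let ?V = "{x \<in> mat_kernel H. cinner x v = 0}"
  have ker_carrier: "\<And>x. x \<in> mat_kernel H \<Longrightarrow> x \<in> carrier_vec d"
    using mat_kernelD[OF H] by blast
  have "submodule class_ring ?V VK"
    unfolding submodule_def
  proof (intro conjI allI impI)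
    show "Module.module class_ring VK" by (rule Ker.module_axioms)
    show "?V \<subseteq> carrier VK" by auto
    show "\<zero>\<^bsub>VK\<^esub> \<in> ?V" using Ker.zero_closed cinner_zero_left[OF v] by auto
  next
    fix a b assume "a \<in> ?V" "b \<in> ?V"
    then show "a \<oplus>\<^bsub>VK\<^esub> b \<in> ?V"
      using Ker.a_closed[of a b] cinner_add_left[OF ker_carrier ker_carrier v, of a b] by auto
  next
    fix c a assume "a \<in> ?V"
    then show "c \<odot>\<^bsub>VK\<^esub> a \<in> ?V"
      using Ker.smult_closed[of c a] cinner_smult_left[OF ker_carrier v, of a c] by auto
  qed
  moreover have "span B = mat_kernel H" and "B \<subseteq> mat_kernel H"
    using B unfolding Ker.basis_def by auto
  ultimately have "mat_kernel H \<subseteq> ?V"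
    using Ker.span_is_subset[of B ?V] orth by blast
  then show ?thesis by blast
qed

definition gram_sum :: "nat \<Rightarrow> complex vec set \<Rightarrow> complex mat" where
  "gram_sum d B = mat d d (\<lambda>(i, j). \<Sum>u\<in>B. u $ i * cnj (u $ j))"

lemma gram_sum_carrier: "gram_sum d B \<in> carrier_mat d d"
  unfolding gram_sum_def by simp

lemma mult_gram_sum_index:
  assumes B: "B \<subseteq> carrier_vec d" and w: "w \<in> carrier_vec d" and i: "i < d"
  shows "(gram_sum d B *\<^sub>v w) $ i = (\<Sum>u\<in>B. (cinner u w \<cdot>\<^sub>v u) $ i)"
proof -
  have "(gram_sum d B *\<^sub>v w) $ i = (\<Sum>u\<in>B. \<Sum>j<d. u $ i * cnj (u $ j) * w $ j)"
    unfolding mult_mat_vec_index_sum[OF gram_sum_carrier w i]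
    using i by (simp add: gram_sum_def sum_distrib_right sum.swap[of _ B])
  also have "\<dots> = (\<Sum>u\<in>B. (cinner u w \<cdot>\<^sub>v u) $ i)"
    using B w i by (intro sum.cong refl)
      (auto simp: cinner_eq_sum[of u d w for u] sum_distrib_left sum_distrib_right ac_simps)
  finally show ?thesis .
qed

lemma mult_gram_sum_in_kernel:
  assumes H: "H \<in> carrier_mat d d" and B: "B \<subseteq> mat_kernel H" and w: "w \<in> carrier_vec d"
  shows "H *\<^sub>v (gram_sum d B *\<^sub>v w) = 0\<^sub>v d"
proof (rule eq_vecI)
  have Bc: "B \<subseteq> carrier_vec d" and HB: "\<And>u. u \<in> B \<Longrightarrow> H *\<^sub>v u = 0\<^sub>v d"
    using B mat_kernelD[OF H] by auto
  fix i assume "i < dim_vec (0\<^sub>v d)"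
  then have i: "i < d" by simp
  have Gw: "gram_sum d B *\<^sub>v w \<in> carrier_vec d"
    using gram_sum_carrier w by (rule mult_mat_vec_carrier)
  have "(H *\<^sub>v (gram_sum d B *\<^sub>v w)) $ i = (\<Sum>j<d. H $$ (i, j) * (gram_sum d B *\<^sub>v w) $ j)"
    by (rule mult_mat_vec_index_sum[OF H Gw i])
  also have "\<dots> = (\<Sum>j<d. H $$ (i, j) * (\<Sum>u\<in>B. cinner u w * u $ j))"
    using Bc w by (intro sum.cong refl) (auto simp: mult_gram_sum_index[OF Bc w] intro!: sum.cong)
  also have "\<dots> = (\<Sum>u\<in>B. cinner u w * (H *\<^sub>v u) $ i)"
    using H Bc i by (simp add: mult_mat_vec_index_sum sum_distrib_left sum.swap[of _ B] ac_simps
        subset_iff del: index_mult_mat_vec)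
  finally show "(H *\<^sub>v (gram_sum d B *\<^sub>v w)) $ i = 0\<^sub>v d $ i"
    using HB i by simp
qed (use H in simp)

lemma qform_gram_sum:
  assumes B: "B \<subseteq> carrier_vec d" and w: "w \<in> carrier_vec d"
  shows "Re (cinner w (gram_sum d B *\<^sub>v w)) = (\<Sum>u\<in>B. (cmod (cinner u w))\<^sup>2)"
proof -
  have "cinner w (gram_sum d B *\<^sub>v w) = (\<Sum>u\<in>B. cinner w (cinner u w \<cdot>\<^sub>v u))"
    using B w mult_mat_vec_carrier[OF gram_sum_carrier w]
    by (intro cinner_sum_right[of _ d] mult_gram_sum_index) auto
  also have "\<dots> = (\<Sum>u\<in>B. complex_of_real ((cmod (cinner u w))\<^sup>2))"
  proof (intro sum.cong refl)
    fix u assume "u \<in> B"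
    then have u: "u \<in> carrier_vec d" using B by blast
    show "cinner w (cinner u w \<cdot>\<^sub>v u) = complex_of_real ((cmod (cinner u w))\<^sup>2)"
      using cinner_smult_right[OF w u] cinner_commute[OF u w] complex_norm_square by metis
  qed
  finally show ?thesis by simp
qed

lemma hermitian_square_plus_gram_sum_inj:
  assumes H: "hermitian d H" and B: "kernel.basis d H B" "finite B"
    and v: "v \<in> carrier_vec d" and zero: "(H * H + gram_sum d B) *\<^sub>v v = 0\<^sub>v d"
  shows "v = 0\<^sub>v d"
proof -
  have Hc: "H \<in> carrier_mat d d" using H by (rule hermitian_carrier)
  interpret kernel d d H by unfold_locales (rule Hc)
  have B_ker: "B \<subseteq> mat_kernel H" using B unfolding Ker.basis_def by auto
  then have Bc: "B \<subseteq> carrier_vec d" using mat_kernel_carrier[OF Hc] by blast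
  have Hv: "H *\<^sub>v v \<in> carrier_vec d" using Hc v by simp
  have Gv: "gram_sum d B *\<^sub>v v \<in> carrier_vec d"
    using gram_sum_carrier v by (rule mult_mat_vec_carrier)
  have HHv: "H *\<^sub>v (H *\<^sub>v v) \<in> carrier_vec d" using Hc Hv by simp
  have "0 = Re (cinner v ((H * H + gram_sum d B) *\<^sub>v v))"
    using zero cinner_zero_right[OF v] by simp
  also have "\<dots> = Re (cinner v (H *\<^sub>v (H *\<^sub>v v)) + cinner v (gram_sum d B *\<^sub>v v))"
    using Hc v
    by (simp add: add_mult_distrib_mat_vec[OF mult_carrier_mat[OF Hc Hc] gram_sum_carrier v]
        cinner_add_right[OF HHv Gv v])
  also have "\<dots> = sqnorm (H *\<^sub>v v) + (\<Sum>u\<in>B. (cmod (cinner u v))\<^sup>2)"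
    using hermitian_cinner_mult[OF H v Hv] qform_gram_sum[OF Bc v] by (simp add: sqnorm_def)
  finally have "sqnorm (H *\<^sub>v v) = 0" and "\<forall>u\<in>B. cmod (cinner u v) = 0"
    using sqnorm_nonneg[of "H *\<^sub>v v"] sum_nonneg_eq_0_iff[OF B(2), of "\<lambda>u. (cmod (cinner u v))\<^sup>2"]
    by (auto simp: add_nonneg_eq_0_iff sum_nonneg)
  then have "v \<in> mat_kernel H" and "\<And>u. u \<in> B \<Longrightarrow> cinner u v = 0"
    using sqnorm_eq_0_iff[OF Hv] v by (auto intro: mat_kernelI[OF Hc])
  then have "cinner v v = 0"
    using orthogonal_mat_kernel_if_orthogonal_basis[OF Hc v B(1)] by blast
  then show ?thesis using sqnorm_eq_0_iff[OF v] cinner_self_eq_sqnorm[of v] by simp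
qed

lemma range_kernel_decomposition:
  assumes H: "hermitian d H" and \<phi>: "\<phi> \<in> carrier_vec d"
  obtains \<chi> \<phi>0 where "\<chi> \<in> carrier_vec d" and "\<phi>0 \<in> kernel d H" and "\<phi> = H *\<^sub>v \<chi> + \<phi>0"
proof -
  have Hc: "H \<in> carrier_mat d d" using H by (rule hermitian_carrier)
  obtain B where B: "finite B" "kernel.basis d H B"
    using kernel_basis_exists[OF Hc] by blast
  have B_ker: "B \<subseteq> mat_kernel H"
  proof -
    interpret kernel d d H by unfold_locales (rule Hc)
    show ?thesis using B unfolding Ker.basis_def by auto
  qed
  define M where "M = H * H + gram_sum d B"
  have Mc: "M \<in> carrier_mat d d" using Hc gram_sum_carrier by (simp add: M_def)
  have "det M \<noteq> 0"
    using det_0_iff_vec_prod_zero[OF Mc] hermitian_square_plus_gram_sum_inj[OF H B(2,1)]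
    unfolding M_def by blast
  then obtain N where N: "N \<in> carrier_mat d d" and MN: "M * N = 1\<^sub>m d"
    using det_non_zero_imp_unit[OF Mc] by (auto simp: Units_def ring_mat_def)
  define w where "w = N *\<^sub>v \<phi>"
  have w: "w \<in> carrier_vec d" using N \<phi> by (simp add: w_def)
  have "\<phi> = M *\<^sub>v w"
    using Mc N \<phi> by (simp add: w_def assoc_mult_mat_vec[symmetric] MN)
  also have "\<dots> = H *\<^sub>v (H *\<^sub>v w) + gram_sum d B *\<^sub>v w"
    using Hc w
    by (simp add: M_def add_mult_distrib_mat_vec[OF mult_carrier_mat[OF Hc Hc] gram_sum_carrier w])
  finally show ?thesis
    using that[of "H *\<^sub>v w" "gram_sum d B *\<^sub>v w"] mult_gram_sum_in_kernel[OF Hc B_ker w]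
      mult_mat_vec_carrier[OF gram_sum_carrier w] Hc w by (simp add: kernel_def)
qed

section \<open>The spectral gap as an operator inequality\<close>

definition qform :: "complex mat \<Rightarrow> complex vec \<Rightarrow> real" where
  "qform H v = Re (cinner v (H *\<^sub>v v))"

lemma cinner_add_smult_expand:
  assumes x: "x \<in> carrier_vec d" and y: "y \<in> carrier_vec d"
    and z: "z \<in> carrier_vec d" and w: "w \<in> carrier_vec d"
  shows "Re (cinner (x + complex_of_real t \<cdot>\<^sub>v y) (z + complex_of_real t \<cdot>\<^sub>v w)) =
    Re (cinner x z) + t * Re (cinner x w) + t * Re (cinner y z) + t\<^sup>2 * Re (cinner y w)"
proof -
  have ty: "complex_of_real t \<cdot>\<^sub>v y \<in> carrier_vec d" and tw: "complex_of_real t \<cdot>\<^sub>v w \<in> carrier_vec d"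
    using y w by auto
  have "cinner (x + complex_of_real t \<cdot>\<^sub>v y) (z + complex_of_real t \<cdot>\<^sub>v w)
      = cinner x z + complex_of_real t * cinner x w + complex_of_real t * cinner y z
        + complex_of_real t * complex_of_real t * cinner y w"
    using x y z w ty tw
    by (simp add: cinner_add_left[OF x ty] cinner_add_right cinner_smult_left cinner_smult_right
        algebra_simps)
  then show ?thesis by (simp add: power2_eq_square)
qed

lemma sqnorm_add_smult_mult:
  assumes H: "hermitian d H" and \<psi>: "\<psi> \<in> carrier_vec d"
  shows "sqnorm (\<psi> + complex_of_real t \<cdot>\<^sub>v (H *\<^sub>v \<psi>))
    = sqnorm \<psi> + 2 * t * qform H \<psi> + t\<^sup>2 * sqnorm (H *\<^sub>v \<psi>)"
proof -
  have H\<psi>: "H *\<^sub>v \<psi> \<in> carrier_vec d" using hermitian_carrier[OF H] \<psi> by simp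
  show ?thesis
    using cinner_add_smult_expand[OF \<psi> H\<psi> \<psi> H\<psi>, of t] hermitian_cinner_mult[OF H \<psi> \<psi>]
    unfolding sqnorm_def qform_def by simp
qed

lemma qform_add_smult_mult:
  assumes H: "hermitian d H" and \<chi>: "\<chi> \<in> carrier_vec d"
  shows "qform H (\<chi> + complex_of_real t \<cdot>\<^sub>v (H *\<^sub>v \<chi>))
    = qform H \<chi> + 2 * t * sqnorm (H *\<^sub>v \<chi>) + t\<^sup>2 * qform H (H *\<^sub>v \<chi>)"
proof -
  have Hc: "H \<in> carrier_mat d d" using H by (rule hermitian_carrier)
  have H\<chi>: "H *\<^sub>v \<chi> \<in> carrier_vec d" and HH\<chi>: "H *\<^sub>v (H *\<^sub>v \<chi>) \<in> carrier_vec d"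
    using Hc \<chi> by auto
  have "H *\<^sub>v (\<chi> + complex_of_real t \<cdot>\<^sub>v (H *\<^sub>v \<chi>)) = H *\<^sub>v \<chi> + complex_of_real t \<cdot>\<^sub>v (H *\<^sub>v (H *\<^sub>v \<chi>))"
    using Hc \<chi> H\<chi> by (simp add: mult_add_distrib_mat_vec mult_mat_vec)
  then show ?thesis
    using cinner_add_smult_expand[OF \<chi> H\<chi> H\<chi> HH\<chi>, of t] hermitian_cinner_mult[OF H \<chi> H\<chi>]
    unfolding sqnorm_def qform_def by simp
qed

lemma nonneg_quadratic_bound:
  fixes \<gamma> a b e :: real
  assumes "0 < \<gamma>" and "\<gamma> * a \<le> b" and "\<And>t. 0 \<le> a + 2 * t * b + t\<^sup>2 * e"
  shows "\<gamma> * b \<le> e"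
proof -
  have "0 \<le> \<gamma>\<^sup>2 * (a + 2 * (- 1 / \<gamma>) * b + (- 1 / \<gamma>)\<^sup>2 * e)"
    using assms(3)[of "- 1 / \<gamma>"] by (intro mult_nonneg_nonneg) simp_all
  also have "\<dots> = \<gamma> * (\<gamma> * a) - 2 * \<gamma> * b + e"
    using assms(1) by (simp add: field_simps power2_eq_square)
  finally show ?thesis
    using mult_left_mono[OF assms(2) less_imp_le[OF assms(1)]] by linarith
qed

lemma mult_add_kernel:
  assumes "H \<in> carrier_mat d d" "\<psi> \<in> carrier_vec d" "\<phi>0 \<in> kernel d H"
  shows "H *\<^sub>v (\<psi> + \<phi>0) = H *\<^sub>v \<psi>"
  using assms by (simp add: kernel_def mult_add_distrib_mat_vec)

lemma qform_add_kernel: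
  assumes H: "hermitian d H" and \<psi>: "\<psi> \<in> carrier_vec d" and \<phi>0: "\<phi>0 \<in> kernel d H"
  shows "qform H (\<psi> + \<phi>0) = qform H \<psi>"
proof -
  have Hc: "H \<in> carrier_mat d d" using H by (rule hermitian_carrier)
  have \<phi>0c: "\<phi>0 \<in> carrier_vec d" and H\<phi>0: "H *\<^sub>v \<phi>0 = 0\<^sub>v d"
    using \<phi>0 unfolding kernel_def by auto
  have H\<psi>: "H *\<^sub>v \<psi> \<in> carrier_vec d" using Hc \<psi> by simp
  have "cinner \<phi>0 (H *\<^sub>v \<psi>) = 0"
    using hermitian_cinner_mult[OF H \<phi>0c \<psi>] H\<phi>0 cinner_zero_left[OF \<psi>] by simp
  then show ?thesis
    unfolding qform_def mult_add_kernel[OF Hc \<psi> \<phi>0] cinner_add_left[OF \<psi> \<phi>0c H\<psi>] by simp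
qed

lemma range_orth_compl_kernel:
  assumes H: "hermitian d H" and \<chi>: "\<chi> \<in> carrier_vec d"
  shows "H *\<^sub>v \<chi> \<in> orth_compl d (kernel d H)"
  unfolding orth_compl_def
proof (intro CollectI conjI ballI)
  show "H *\<^sub>v \<chi> \<in> carrier_vec d" using hermitian_carrier[OF H] \<chi> by simp
  fix v assume "v \<in> kernel d H"
  then have v: "v \<in> carrier_vec d" and Hv: "H *\<^sub>v v = 0\<^sub>v d" unfolding kernel_def by auto
  show "cinner (H *\<^sub>v \<chi>) v = 0"
    using hermitian_cinner_mult[OF H \<chi> v] Hv cinner_zero_right[OF \<chi>] by simp
qed

lemma orth_compl_kernel_range:
  assumes H: "hermitian d H" and \<psi>: "\<psi> \<in> orth_compl d (kernel d H)"
  obtains \<chi> where "\<chi> \<in> carrier_vec d" and "\<psi> = H *\<^sub>v \<chi>"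
proof -
  have \<psi>c: "\<psi> \<in> carrier_vec d" using \<psi> unfolding orth_compl_def by blast
  obtain \<chi> \<phi>0 where \<chi>: "\<chi> \<in> carrier_vec d" and \<phi>0: "\<phi>0 \<in> kernel d H"
    and decomp: "\<psi> = H *\<^sub>v \<chi> + \<phi>0"
    using range_kernel_decomposition[OF H \<psi>c] by blast
  have \<phi>0c: "\<phi>0 \<in> carrier_vec d" using \<phi>0 unfolding kernel_def by blast
  have H\<chi>: "H *\<^sub>v \<chi> \<in> carrier_vec d" using hermitian_carrier[OF H] \<chi> by simp
  have "cinner \<psi> \<phi>0 = 0" and "cinner (H *\<^sub>v \<chi>) \<phi>0 = 0"
    using \<psi> range_orth_compl_kernel[OF H \<chi>] \<phi>0 unfolding orth_compl_def by auto
  then have "cinner \<phi>0 \<phi>0 = 0"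
    using cinner_add_left[OF H\<chi> \<phi>0c \<phi>0c] decomp by simp
  then have "\<phi>0 = 0\<^sub>v d"
    using sqnorm_eq_0_iff[OF \<phi>0c] by (simp add: sqnorm_def)
  then show ?thesis using that[OF \<chi>] decomp H\<chi> by simp
qed

lemma orth_compl_smult:
  assumes "S \<subseteq> carrier_vec d" and "\<psi> \<in> orth_compl d S"
  shows "c \<cdot>\<^sub>v \<psi> \<in> orth_compl d S"
  using assms cinner_smult_left[of \<psi> d _ c] unfolding orth_compl_def by auto

lemma gap_le_qform:
  assumes H: "hermitian d H" and \<gamma>: "ereal \<gamma> \<le> gap d H" and \<psi>: "\<psi> \<in> orth_compl d (kernel d H)"
  shows "\<gamma> * sqnorm \<psi> \<le> qform H \<psi>"
proof (cases "\<psi> = 0\<^sub>v d")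
  case True
  then show ?thesis
    using hermitian_carrier[OF H] by (simp add: qform_def sqnorm_def cinner_zero_left)
next
  case False
  have \<psi>c: "\<psi> \<in> carrier_vec d" using \<psi> unfolding orth_compl_def by blast
  have Hc: "H \<in> carrier_mat d d" using H by (rule hermitian_carrier)
  define r where "r = sqnorm \<psi>"
  have r: "0 < r"
    using sqnorm_nonneg[of \<psi>] sqnorm_eq_0_iff[OF \<psi>c] False unfolding r_def by linarith
  define s where "s = 1 / sqrt r"
  have ss: "s * s * r = 1" using r by (simp add: s_def)
  define \<psi>' where "\<psi>' = complex_of_real s \<cdot>\<^sub>v \<psi>"
  have "\<psi>' \<in> orth_compl d (kernel d H)"
    unfolding \<psi>'_def by (rule orth_compl_smult[OF _ \<psi>]) (auto simp: kernel_def)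
  moreover have "cinner \<psi>' \<psi>' = 1"
    using \<psi>c ss cinner_self_eq_sqnorm[of \<psi>]
    by (simp add: \<psi>'_def cinner_smult_left[of _ d] cinner_smult_right r_def flip: of_real_mult)
  ultimately have "gap d H \<le> ereal (qform H \<psi>')"
    unfolding gap_def qform_def by (intro Inf_lower) blast
  also have "qform H \<psi>' = s * s * qform H \<psi>"
    using Hc \<psi>c by (simp add: \<psi>'_def qform_def mult_mat_vec cinner_smult_left[of _ d]
        cinner_smult_right)
  finally have "ereal \<gamma> \<le> ereal (s * s * qform H \<psi>)" by (rule order_trans[OF \<gamma>])
  then have "\<gamma> \<le> s * s * qform H \<psi>" by simp
  then have "\<gamma> * r \<le> s * s * r * qform H \<psi>"
    using r by (simp add: mult_right_mono algebra_simps)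
  then show ?thesis using ss by (simp add: r_def mult.commute)
qed

lemma sqnorm_ge_if_gap_ge:
  assumes H: "hermitian d H" and psd: "\<And>v. v \<in> carrier_vec d \<Longrightarrow> 0 \<le> qform H v"
    and \<gamma>: "ereal \<gamma> \<le> gap d H" and \<phi>: "\<phi> \<in> carrier_vec d"
  shows "\<gamma> * qform H \<phi> \<le> sqnorm (H *\<^sub>v \<phi>)"
proof -
  have Hc: "H \<in> carrier_mat d d" using H by (rule hermitian_carrier)
  obtain \<chi> \<phi>0 where \<chi>: "\<chi> \<in> carrier_vec d" and \<phi>0: "\<phi>0 \<in> kernel d H"
    and decomp: "\<phi> = H *\<^sub>v \<chi> + \<phi>0"
    using range_kernel_decomposition[OF H \<phi>] by blast
  define \<psi> where "\<psi> = H *\<^sub>v \<chi>"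
  have \<psi>: "\<psi> \<in> carrier_vec d" using Hc \<chi> by (simp add: \<psi>_def)
  have "qform H \<phi> = qform H \<psi>" and "H *\<^sub>v \<phi> = H *\<^sub>v \<psi>"
    unfolding decomp \<psi>_def[symmetric]
    by (rule qform_add_kernel[OF H \<psi> \<phi>0], rule mult_add_kernel[OF Hc \<psi> \<phi>0])
  moreover have "\<gamma> * qform H \<psi> \<le> sqnorm (H *\<^sub>v \<psi>)"
  proof (cases "\<gamma> \<le> 0")
    case True
    then show ?thesis
      using psd[OF \<psi>] sqnorm_nonneg[of "H *\<^sub>v \<psi>"] by (meson mult_nonpos_nonneg order_trans)
  next
    case False
    show ?thesis
    proof (rule nonneg_quadratic_bound)
      show "\<gamma> * sqnorm \<psi> \<le> qform H \<psi>"
        unfolding \<psi>_def by (rule gap_le_qform[OF H \<gamma> range_orth_compl_kernel[OF H \<chi>]])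
      show "0 \<le> sqnorm \<psi> + 2 * t * qform H \<psi> + t\<^sup>2 * sqnorm (H *\<^sub>v \<psi>)" for t
        using sqnorm_nonneg sqnorm_add_smult_mult[OF H \<psi>] by metis
    qed (use False in simp)
  qed
  ultimately show ?thesis by simp
qed

lemma gap_geI:
  assumes H: "hermitian d H" and psd: "\<And>v. v \<in> carrier_vec d \<Longrightarrow> 0 \<le> qform H v"
    and bound: "\<And>\<phi>. \<phi> \<in> carrier_vec d \<Longrightarrow> c * qform H \<phi> \<le> sqnorm (H *\<^sub>v \<phi>)"
  shows "ereal c \<le> gap d H"
  unfolding gap_def
proof (rule Inf_greatest)
  fix x assume "x \<in> {ereal (Re (cinner \<psi> (H *\<^sub>v \<psi>))) | \<psi>.
    \<psi> \<in> orth_compl d (kernel d H) \<and> cinner \<psi> \<psi> = 1}"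
  then obtain \<psi> where x: "x = ereal (qform H \<psi>)" and \<psi>: "\<psi> \<in> orth_compl d (kernel d H)"
    and unit: "cinner \<psi> \<psi> = 1"
    unfolding qform_def by blast
  obtain \<chi> where \<chi>: "\<chi> \<in> carrier_vec d" and \<psi>_eq: "\<psi> = H *\<^sub>v \<chi>"
    using orth_compl_kernel_range[OF H \<psi>] by blast
  have "c \<le> qform H \<psi>"
  proof (cases "c \<le> 0")
    case True
    have "\<psi> \<in> carrier_vec d" using \<psi> unfolding orth_compl_def by blast
    then show ?thesis using psd True by fastforce
  next
    case False
    have "sqnorm \<psi> = 1" using unit by (simp add: sqnorm_def)
    then have unit_H\<chi>: "sqnorm (H *\<^sub>v \<chi>) = 1" by (simp only: \<psi>_eq)
    have "c * 1 \<le> qform H \<psi>"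
    proof (rule nonneg_quadratic_bound)
      show "c * qform H \<chi> \<le> 1" using bound[OF \<chi>] unit_H\<chi> by simp
      show "0 \<le> qform H \<chi> + 2 * t * 1 + t\<^sup>2 * qform H \<psi>" for t
        using psd qform_add_smult_mult[OF H \<chi>, of t] unit_H\<chi> \<psi>_eq \<chi>
          hermitian_carrier[OF H] by (metis add_carrier_vec smult_carrier_vec mult_mat_vec_carrier)
    qed (use False in simp)
    then show ?thesis by simp
  qed
  then show "ereal c \<le> x" unfolding x by simp
qed

lemma gap_ge_iff:
  assumes "hermitian d H" and "\<And>v. v \<in> carrier_vec d \<Longrightarrow> 0 \<le> qform H v"
  shows "ereal c \<le> gap d H \<longleftrightarrow> (\<forall>\<phi>\<in>carrier_vec d. c * qform H \<phi> \<le> sqnorm (H *\<^sub>v \<phi>))"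
  using sqnorm_ge_if_gap_ge[OF assms] gap_geI[OF assms] by blast

lemma ereal_mult_diff_le_if_real_bounds:
  fixes G X :: ereal and a c :: real
  assumes a: "0 < a" and bound: "\<And>\<gamma>. ereal \<gamma> \<le> G \<Longrightarrow> ereal (a * (\<gamma> - c)) \<le> X"
  shows "ereal a * (G - ereal c) \<le> X"
proof (cases G)
  case (real \<gamma>)
  then show ?thesis using bound[of \<gamma>] by simp
next
  case PInf
  have "X = \<infinity>"
  proof (rule ereal_top)
    fix B
    show "ereal B \<le> X" using bound[of "B / a + c"] PInf a by simp
  qed
  then show ?thesis by simp
next
  case MInf
  then show ?thesis using a by simp
qed

section \<open>Sums of orthogonal projections\<close>

lemma opsum_carrier: "opsum d F I \<in> carrier_mat d d"
  unfolding opsum_def by simp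

lemma mult_opsum_index:
  assumes F: "\<And>i. i \<in> I \<Longrightarrow> F i \<in> carrier_mat d d" and v: "v \<in> carrier_vec d" and j: "j < d"
  shows "(opsum d F I *\<^sub>v v) $ j = (\<Sum>i\<in>I. (F i *\<^sub>v v) $ j)"
proof -
  have "(opsum d F I *\<^sub>v v) $ j = (\<Sum>l<d. \<Sum>i\<in>I. F i $$ (j, l) * v $ l)"
    unfolding mult_mat_vec_index_sum[OF opsum_carrier v j]
    using j by (simp add: opsum_def sum_distrib_right)
  also have "\<dots> = (\<Sum>i\<in>I. (F i *\<^sub>v v) $ j)"
    by (subst sum.swap) (simp add: mult_mat_vec_index_sum[OF F v j] del: index_mult_mat_vec)
  finally show ?thesis .
qed

lemma hermitian_opsum:
  assumes "\<And>i. i \<in> I \<Longrightarrow> hermitian d (F i)"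
  shows "hermitian d (opsum d F I)"
  unfolding hermitian_def
proof (intro conjI allI impI opsum_carrier)
  fix i j assume "i < d" "j < d"
  then have "\<And>l. l \<in> I \<Longrightarrow> F l $$ (i, j) = cnj (F l $$ (j, i))"
    using assms unfolding hermitian_def by blast
  then show "opsum d F I $$ (i, j) = cnj (opsum d F I $$ (j, i))"
    using \<open>i < d\<close> \<open>j < d\<close> by (simp add: opsum_def)
qed

lemma opsum_reindex:
  assumes "inj_on h I"
  shows "opsum d (\<lambda>i. F (h i)) I = opsum d F (h ` I)"
  using assms unfolding opsum_def by (simp add: sum.reindex)

lemma cinner_orth_proj_self:
  assumes P: "orth_proj d P" and \<phi>: "\<phi> \<in> carrier_vec d"
  shows "cinner \<phi> (P *\<^sub>v \<phi>) = cinner (P *\<^sub>v \<phi>) (P *\<^sub>v \<phi>)"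
proof -
  have Pc: "P \<in> carrier_mat d d" and PP: "P * P = P" using P unfolding orth_proj_def by auto
  have P\<phi>: "P *\<^sub>v \<phi> \<in> carrier_vec d" using Pc \<phi> by simp
  have "P *\<^sub>v (P *\<^sub>v \<phi>) = P *\<^sub>v \<phi>"
    using assoc_mult_mat_vec[OF Pc Pc \<phi>] PP by simp
  then show ?thesis
    using hermitian_cinner_mult[OF orth_proj_hermitian[OF P] \<phi> P\<phi>] by simp
qed

lemma commuting_orth_proj_cinner_nonneg:
  assumes P: "orth_proj d P" and Q: "orth_proj d Q" and comm: "P * Q = Q * P"
    and \<phi>: "\<phi> \<in> carrier_vec d"
  shows "0 \<le> Re (cinner (P *\<^sub>v \<phi>) (Q *\<^sub>v \<phi>))"
proof -
  have Pc: "P \<in> carrier_mat d d" and PP: "P * P = P" using P unfolding orth_proj_def by auto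
  have Qc: "Q \<in> carrier_mat d d" using Q unfolding orth_proj_def by auto
  have P\<phi>: "P *\<^sub>v \<phi> \<in> carrier_vec d" and Q\<phi>: "Q *\<^sub>v \<phi> \<in> carrier_vec d"
    and QP\<phi>: "Q *\<^sub>v (P *\<^sub>v \<phi>) \<in> carrier_vec d"
    using Pc Qc \<phi> by auto
  have "P * Q = P * P * Q" using PP by simp
  also have "\<dots> = P * (Q * P)" using comm assoc_mult_mat[OF Pc Pc Qc] by simp
  finally have "P * Q *\<^sub>v \<phi> = P * (Q * P) *\<^sub>v \<phi>" by simp
  then have PQ: "P *\<^sub>v (Q *\<^sub>v \<phi>) = P *\<^sub>v (Q *\<^sub>v (P *\<^sub>v \<phi>))"
    using Pc Qc \<phi> mult_carrier_mat[OF Qc Pc] by simp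
  have "cinner (P *\<^sub>v \<phi>) (Q *\<^sub>v \<phi>) = cinner \<phi> (P *\<^sub>v (Q *\<^sub>v (P *\<^sub>v \<phi>)))"
    using hermitian_cinner_mult[OF orth_proj_hermitian[OF P] \<phi> Q\<phi>] PQ by simp
  also have "\<dots> = cinner (Q *\<^sub>v (P *\<^sub>v \<phi>)) (Q *\<^sub>v (P *\<^sub>v \<phi>))"
    using hermitian_cinner_mult[OF orth_proj_hermitian[OF P] \<phi> QP\<phi>]
      cinner_orth_proj_self[OF Q P\<phi>] by simp
  finally show ?thesis
    using sqnorm_nonneg[of "Q *\<^sub>v (P *\<^sub>v \<phi>)"] by (simp add: sqnorm_def)
qed

lemma qform_opsum_orth_proj:
  assumes P: "\<And>a. a \<in> A \<Longrightarrow> orth_proj d (P a)" and \<phi>: "\<phi> \<in> carrier_vec d"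
  shows "qform (opsum d P A) \<phi> = (\<Sum>a\<in>A. sqnorm (P a *\<^sub>v \<phi>))"
proof -
  have Pc: "\<And>a. a \<in> A \<Longrightarrow> P a \<in> carrier_mat d d" using P unfolding orth_proj_def by blast
  have "cinner \<phi> (opsum d P A *\<^sub>v \<phi>) = (\<Sum>a\<in>A. cinner \<phi> (P a *\<^sub>v \<phi>))"
    using Pc \<phi> mult_mat_vec_carrier[OF opsum_carrier \<phi>]
    by (intro cinner_sum_right[of _ d] mult_opsum_index) (auto intro: mult_mat_vec_carrier)
  then show ?thesis
    unfolding qform_def sqnorm_def using cinner_orth_proj_self[OF P \<phi>] by simp
qed

lemma qform_opsum_orth_proj_nonneg:
  assumes "\<And>a. a \<in> A \<Longrightarrow> orth_proj d (P a)" and "\<phi> \<in> carrier_vec d"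
  shows "0 \<le> qform (opsum d P A) \<phi>"
  by (simp add: qform_opsum_orth_proj[OF assms] sum_nonneg sqnorm_nonneg)

lemma gap_opsum_orth_proj_ge_iff:
  assumes "\<And>a. a \<in> A \<Longrightarrow> orth_proj d (P a)"
  shows "ereal c \<le> gap d (opsum d P A)
    \<longleftrightarrow> (\<forall>\<phi>\<in>carrier_vec d. c * qform (opsum d P A) \<phi> \<le> sqnorm (opsum d P A *\<^sub>v \<phi>))"
  using assms
  by (intro gap_ge_iff hermitian_opsum orth_proj_hermitian qform_opsum_orth_proj_nonneg) auto

lemma sqnorm_opsum:
  assumes Pc: "\<And>a. a \<in> A \<Longrightarrow> P a \<in> carrier_mat d d" and \<phi>: "\<phi> \<in> carrier_vec d"
  shows "sqnorm (opsum d P A *\<^sub>v \<phi>) = (\<Sum>a\<in>A. \<Sum>b\<in>A. Re (cinner (P a *\<^sub>v \<phi>) (P b *\<^sub>v \<phi>)))"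
proof -
  have H\<phi>: "opsum d P A *\<^sub>v \<phi> \<in> carrier_vec d" using opsum_carrier \<phi> by (rule mult_mat_vec_carrier)
  have P\<phi>: "\<And>a. a \<in> A \<Longrightarrow> P a *\<^sub>v \<phi> \<in> carrier_vec d"
    using Pc \<phi> by (rule mult_mat_vec_carrier)
  have expand: "\<And>i. i < d \<Longrightarrow> (opsum d P A *\<^sub>v \<phi>) $ i = (\<Sum>a\<in>A. (P a *\<^sub>v \<phi>) $ i)"
    using Pc \<phi> by (rule mult_opsum_index)
  have "cinner (opsum d P A *\<^sub>v \<phi>) (opsum d P A *\<^sub>v \<phi>)
      = (\<Sum>a\<in>A. cinner (P a *\<^sub>v \<phi>) (opsum d P A *\<^sub>v \<phi>))"
    by (rule cinner_sum_left[OF H\<phi> H\<phi> P\<phi> expand])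
  also have "\<dots> = (\<Sum>a\<in>A. \<Sum>b\<in>A. cinner (P a *\<^sub>v \<phi>) (P b *\<^sub>v \<phi>))"
    by (intro sum.cong refl cinner_sum_right[OF P\<phi> H\<phi> P\<phi> expand])
  finally show ?thesis by (simp add: sqnorm_def)
qed

lemma sum_windows_eq_sum_card:
  fixes f :: "'a \<Rightarrow> 'b::comm_semiring_1"
  assumes "finite A" and "finite K" and "\<And>k. k \<in> K \<Longrightarrow> W k \<subseteq> A"
  shows "(\<Sum>k\<in>K. \<Sum>a\<in>W k. f a) = (\<Sum>a\<in>A. of_nat (card {k\<in>K. a \<in> W k}) * f a)"
proof -
  have "(\<Sum>k\<in>K. \<Sum>a\<in>W k. f a) = (\<Sum>k\<in>K. \<Sum>a\<in>{a\<in>A. a \<in> W k}. f a)"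
    using assms(3) by (intro sum.cong refl) blast+
  also have "\<dots> = (\<Sum>a\<in>A. \<Sum>k\<in>{k\<in>K. a \<in> W k}. f a)"
    using assms(2,1) by (rule sum.swap_restrict)
  finally show ?thesis by simp
qed

lemma sum_windows_pairs_eq_sum_card:
  fixes g :: "'a \<Rightarrow> 'a \<Rightarrow> 'b::comm_semiring_1"
  assumes "finite A" and "finite K" and "\<And>k. k \<in> K \<Longrightarrow> W k \<subseteq> A"
  shows "(\<Sum>k\<in>K. \<Sum>a\<in>W k. \<Sum>b\<in>W k. g a b)
    = (\<Sum>a\<in>A. \<Sum>b\<in>A. of_nat (card {k\<in>K. a \<in> W k \<and> b \<in> W k}) * g a b)"
proof -
  have "(\<Sum>k\<in>K. \<Sum>p\<in>W k \<times> W k. case_prod g p)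
      = (\<Sum>p\<in>A \<times> A. of_nat (card {k\<in>K. p \<in> W k \<times> W k}) * case_prod g p)"
    using assms by (intro sum_windows_eq_sum_card) auto
  then show ?thesis by (simp add: sum.cartesian_product split_def mem_Times_iff)
qed

section \<open>Projections covered by windows\<close>

locale projection_cover =
  fixes d n :: nat and P :: "nat \<Rightarrow> complex mat" and A :: "nat set"
    and K :: "'k set" and W :: "'k \<Rightarrow> nat set"
  assumes finite_sites: "finite A" and finite_windows: "finite K"
    and orth_proj: "a \<in> A \<Longrightarrow> orth_proj d (P a)"
    and window_subset: "k \<in> K \<Longrightarrow> W k \<subseteq> A"
    and n_pos: "0 < n"
    and card_cover: "a \<in> A \<Longrightarrow> card {k\<in>K. a \<in> W k} = n"
    and card_cover_pair: "a \<in> A \<Longrightarrow> b \<in> A \<Longrightarrow> a \<noteq> b \<Longrightarrow>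
      card {k\<in>K. a \<in> W k \<and> b \<in> W k} \<le> n - 1"
    and card_cover_noncommuting: "a \<in> A \<Longrightarrow> b \<in> A \<Longrightarrow> a \<noteq> b \<Longrightarrow> P a * P b \<noteq> P b * P a \<Longrightarrow>
      card {k\<in>K. a \<in> W k \<and> b \<in> W k} = n - 1"
begin

lemma proj_carrier: "a \<in> A \<Longrightarrow> P a \<in> carrier_mat d d"
  using orth_proj unfolding orth_proj_def by blast

lemma sum_qform_windows:
  assumes \<phi>: "\<phi> \<in> carrier_vec d"
  shows "(\<Sum>k\<in>K. qform (opsum d P (W k)) \<phi>) = real n * qform (opsum d P A) \<phi>"
proof -
  have "(\<Sum>k\<in>K. qform (opsum d P (W k)) \<phi>) = (\<Sum>k\<in>K. \<Sum>a\<in>W k. sqnorm (P a *\<^sub>v \<phi>))"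
    using window_subset orth_proj \<phi> by (intro sum.cong refl qform_opsum_orth_proj) blast+
  also have "\<dots> = (\<Sum>a\<in>A. real n * sqnorm (P a *\<^sub>v \<phi>))"
    by (simp add: sum_windows_eq_sum_card[OF finite_sites finite_windows window_subset] card_cover)
  also have "\<dots> = real n * qform (opsum d P A) \<phi>"
    using orth_proj \<phi> by (simp add: qform_opsum_orth_proj sum_distrib_left)
  finally show ?thesis .
qed

lemma card_cover_weight_le:
  assumes \<phi>: "\<phi> \<in> carrier_vec d" and a: "a \<in> A" and b: "b \<in> A"
  defines "c \<equiv> Re (cinner (P a *\<^sub>v \<phi>) (P b *\<^sub>v \<phi>))"
  shows "real (card {k\<in>K. a \<in> W k \<and> b \<in> W k}) * c \<le> real (n - 1) * c + (if a = b then c else 0)"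
proof (cases "a = b")
  case True
  then show ?thesis using card_cover[OF a] n_pos by (simp add: algebra_simps)
next
  case False
  show ?thesis
  proof (cases "P a * P b = P b * P a")
    case True
    have "0 \<le> c"
      unfolding c_def by (rule commuting_orth_proj_cinner_nonneg[OF orth_proj[OF a] orth_proj[OF b] True \<phi>])
    then show ?thesis using card_cover_pair[OF a b False] False by (simp add: mult_right_mono)
  next
    case noncommuting: False
    then show ?thesis using card_cover_noncommuting[OF a b False] False by simp
  qed
qed

lemma sum_sqnorm_windows_le:
  assumes \<phi>: "\<phi> \<in> carrier_vec d"
  shows "(\<Sum>k\<in>K. sqnorm (opsum d P (W k) *\<^sub>v \<phi>))
    \<le> real (n - 1) * sqnorm (opsum d P A *\<^sub>v \<phi>) + qform (opsum d P A) \<phi>"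
proof -
  define c where "c a b = Re (cinner (P a *\<^sub>v \<phi>) (P b *\<^sub>v \<phi>))" for a b
  have "(\<Sum>k\<in>K. sqnorm (opsum d P (W k) *\<^sub>v \<phi>)) = (\<Sum>k\<in>K. \<Sum>a\<in>W k. \<Sum>b\<in>W k. c a b)"
    unfolding c_def using window_subset proj_carrier \<phi> by (intro sum.cong refl sqnorm_opsum) blast+
  also have "\<dots> = (\<Sum>a\<in>A. \<Sum>b\<in>A. real (card {k\<in>K. a \<in> W k \<and> b \<in> W k}) * c a b)"
    by (rule sum_windows_pairs_eq_sum_card[OF finite_sites finite_windows window_subset])
  also have "\<dots> \<le> (\<Sum>a\<in>A. \<Sum>b\<in>A. real (n - 1) * c a b + (if a = b then c a b else 0))"
    unfolding c_def by (intro sum_mono card_cover_weight_le[OF \<phi>])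
  also have "\<dots> = real (n - 1) * (\<Sum>a\<in>A. \<Sum>b\<in>A. c a b) + (\<Sum>a\<in>A. c a a)"
    using finite_sites by (simp add: sum.distrib sum_distrib_left)
  also have "\<dots> = real (n - 1) * sqnorm (opsum d P A *\<^sub>v \<phi>) + qform (opsum d P A) \<phi>"
    using sqnorm_opsum[OF proj_carrier \<phi>] qform_opsum_orth_proj[OF orth_proj \<phi>]
    by (simp add: c_def sqnorm_def)
  finally show ?thesis .
qed

lemma gap_ge_windows:
  assumes n: "1 < n" and gaps: "\<And>k. k \<in> K \<Longrightarrow> ereal \<gamma> \<le> gap d (opsum d P (W k))"
  shows "ereal (real n / (real n - 1) * (\<gamma> - 1 / real n)) \<le> gap d (opsum d P A)"
proof -
  have "real n / (real n - 1) * (\<gamma> - 1 / real n) * qform (opsum d P A) \<phi>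
      \<le> sqnorm (opsum d P A *\<^sub>v \<phi>)" if \<phi>: "\<phi> \<in> carrier_vec d" for \<phi>
  proof -
    have window_bound: "\<gamma> * qform (opsum d P (W k)) \<phi> \<le> sqnorm (opsum d P (W k) *\<^sub>v \<phi>)"
      if "k \<in> K" for k
      using gaps[OF that] gap_opsum_orth_proj_ge_iff[of "W k" d P \<gamma>] orth_proj window_subset[OF that] \<phi>
      by blast
    have "\<gamma> * (real n * qform (opsum d P A) \<phi>) = (\<Sum>k\<in>K. \<gamma> * qform (opsum d P (W k)) \<phi>)"
      unfolding sum_qform_windows[OF \<phi>, symmetric] by (simp add: sum_distrib_left)
    also have "\<dots> \<le> (\<Sum>k\<in>K. sqnorm (opsum d P (W k) *\<^sub>v \<phi>))"
      using window_bound by (rule sum_mono)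
    also have "\<dots> \<le> real (n - 1) * sqnorm (opsum d P A *\<^sub>v \<phi>) + qform (opsum d P A) \<phi>"
      by (rule sum_sqnorm_windows_le[OF \<phi>])
    finally have "(real n * \<gamma> - 1) * qform (opsum d P A) \<phi>
        \<le> sqnorm (opsum d P A *\<^sub>v \<phi>) * (real n - 1)"
      using n by (simp add: algebra_simps)
    moreover have "real n / (real n - 1) * (\<gamma> - 1 / real n) * qform (opsum d P A) \<phi>
        = (real n * \<gamma> - 1) * qform (opsum d P A) \<phi> / (real n - 1)"
      using n by (simp add: field_simps)
    moreover have "0 < real n - 1" using n by simp
    ultimately show ?thesis by (simp only: pos_divide_le_eq)
  qed
  then show ?thesis using gap_opsum_orth_proj_ge_iff[of A d P] orth_proj by blast
qed

end

section \<open>Cyclic windows\<close>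

definition cyc_window :: "nat \<Rightarrow> nat \<Rightarrow> nat \<Rightarrow> nat set" where
  "cyc_window L n k = {a \<in> {1..L}. (k \<le> a \<and> a < k + n) \<or> (k \<le> a + L \<and> a + L < k + n)}"

lemma cyc_eq_if:
  assumes "1 \<le> i" "i \<le> 2 * L"
  shows "cyc L i = (if i \<le> L then i else i - L)"
proof (cases "i \<le> L")
  case True
  then have "(i + L - 1) mod L = i - 1"
    using assms by (simp add: mod_if[of "i + L - 1" L] le_mod_geq)
  then show ?thesis using True assms unfolding cyc_def by simp
next
  case False
  have "i + L - 1 = (i - L - 1) + 2 * L" using False assms by simp
  then have "(i + L - 1) mod L = (i - L - 1) mod L" by (metis mod_mult_self1)
  also have "\<dots> = i - L - 1" using False assms by simp
  finally show ?thesis using False assms unfolding cyc_def by simp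
qed

lemma cyc_image_window:
  assumes k: "k \<in> {1..L}" and n: "n < L"
  shows "cyc L ` {k..n + k - 1} = cyc_window L n k"
proof
  show "cyc L ` {k..n + k - 1} \<subseteq> cyc_window L n k"
  proof
    fix a assume "a \<in> cyc L ` {k..n + k - 1}"
    then obtain i where i: "i \<in> {k..n + k - 1}" and a: "a = cyc L i" by blast
    have "a = (if i \<le> L then i else i - L)" unfolding a using i k n by (intro cyc_eq_if) auto
    then show "a \<in> cyc_window L n k" using i k n unfolding cyc_window_def by auto
  qed
next
  show "cyc_window L n k \<subseteq> cyc L ` {k..n + k - 1}"
  proof
    fix a assume a: "a \<in> cyc_window L n k"
    show "a \<in> cyc L ` {k..n + k - 1}"
    proof (cases "k \<le> a")
      case True
      then have "a \<in> {k..n + k - 1}" "cyc L a = a"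
        using a k n unfolding cyc_window_def by (auto simp: cyc_eq_if)
      then show ?thesis by (metis image_eqI)
    next
      case False
      then have "a + L \<in> {k..n + k - 1}" "cyc L (a + L) = a"
        using a k n unfolding cyc_window_def by (auto simp: cyc_eq_if)
      then show ?thesis by (metis image_eqI)
    qed
  qed
qed

lemma inj_on_cyc_window:
  assumes k: "k \<in> {1..L}" and n: "n < L"
  shows "inj_on (cyc L) {k..n + k - 1}"
proof
  fix i j assume i: "i \<in> {k..n + k - 1}" and j: "j \<in> {k..n + k - 1}" and eq: "cyc L i = cyc L j"
  have "cyc L i = (if i \<le> L then i else i - L)" using i k n by (intro cyc_eq_if) auto
  moreover have "cyc L j = (if j \<le> L then j else j - L)" using j k n by (intro cyc_eq_if) auto
  ultimately show "i = j" using eq i j k n by (auto split: if_splits)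
qed

lemma card_cyc_windows_containing:
  assumes a: "a \<in> {1..L}" and n: "n < L"
  shows "card {k \<in> {1..L}. a \<in> cyc_window L n k} = n"
proof (cases "n \<le> a")
  case True
  then have "{k \<in> {1..L}. a \<in> cyc_window L n k} = {a + 1 - n..a}"
    using a n unfolding cyc_window_def by auto
  then show ?thesis using True by simp
next
  case False
  then have "{k \<in> {1..L}. a \<in> cyc_window L n k} = {1..a} \<union> {a + L + 1 - n..L}"
    using a n unfolding cyc_window_def by auto
  moreover have "card ({1..a} \<union> {a + L + 1 - n..L}) = card {1..a} + card {a + L + 1 - n..L}"
    using n False by (intro card_Un_disjoint) auto
  ultimately show ?thesis using False a n by simp
qed

lemma card_cyc_windows_containing_pair_le:
  assumes a: "a \<in> {1..L}" and b: "b \<in> {1..L}" and ab: "a \<noteq> b" and n: "0 < n" "n < L"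
  shows "card {k \<in> {1..L}. a \<in> cyc_window L n k \<and> b \<in> cyc_window L n k} \<le> n - 1"
proof -
  define ending_at_a where "ending_at_a = (if n \<le> a then a + 1 - n else a + L + 1 - n)"
  define starting_after_b where "starting_after_b = (if b = L then 1 else b + 1)"
  have "\<exists>k \<in> {a, ending_at_a, starting_after_b}. a \<in> cyc_window L n k \<and> b \<notin> cyc_window L n k"
    using a b ab n unfolding cyc_window_def ending_at_a_def starting_after_b_def by auto
  moreover have "{a, ending_at_a, starting_after_b} \<subseteq> {1..L}"
    using a b n unfolding ending_at_a_def starting_after_b_def by auto
  ultimately have "{k \<in> {1..L}. a \<in> cyc_window L n k \<and> b \<in> cyc_window L n k}
      \<subset> {k \<in> {1..L}. a \<in> cyc_window L n k}"
    by blast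
  then have "card {k \<in> {1..L}. a \<in> cyc_window L n k \<and> b \<in> cyc_window L n k}
      < card {k \<in> {1..L}. a \<in> cyc_window L n k}"
    by (intro psubset_card_mono) auto
  then show ?thesis using card_cyc_windows_containing[OF a n(2)] by simp
qed

lemma card_cyc_windows_containing_successor:
  assumes a: "a \<in> {1..L}" and n: "0 < n" "n < L"
  shows "card {k \<in> {1..L}. a \<in> cyc_window L n k \<and> cyc L (Suc a) \<in> cyc_window L n k} = n - 1"
proof -
  define ending_at_a where "ending_at_a = (if n \<le> a then a + 1 - n else a + L + 1 - n)"
  have succ: "cyc L (Suc a) = (if a = L then 1 else a + 1)"
    using a by (subst cyc_eq_if) auto
  have "{k \<in> {1..L}. a \<in> cyc_window L n k \<and> cyc L (Suc a) \<in> cyc_window L n k}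
      = {k \<in> {1..L}. a \<in> cyc_window L n k} - {ending_at_a}"
    using a n unfolding succ cyc_window_def ending_at_a_def by (cases "a = L") auto
  moreover have "ending_at_a \<in> {k \<in> {1..L}. a \<in> cyc_window L n k}"
    using a n unfolding cyc_window_def ending_at_a_def by auto
  ultimately show ?thesis using card_cyc_windows_containing[OF a n(2)] by simp
qed

lemma card_cyc_windows_containing_neighbours:
  assumes a: "a \<in> {1..L}" and b: "b \<in> {1..L}" and ab: "a \<noteq> b" and n: "0 < n" "n < L"
    and neighbours: "a = b + 1 \<or> b = a + 1 \<or> {a, b} = {1, L}"
  shows "card {k \<in> {1..L}. a \<in> cyc_window L n k \<and> b \<in> cyc_window L n k} = n - 1"
proof -
  have succ: "cyc L (Suc i) = (if i = L then 1 else i + 1)" if "i \<in> {1..L}" for i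
    using that by (subst cyc_eq_if) auto
  from neighbours have "b = cyc L (Suc a) \<or> a = cyc L (Suc b)"
    using a b ab by (auto simp: succ doubleton_eq_iff)
  then show ?thesis
    using card_cyc_windows_containing_successor[OF a n] card_cyc_windows_containing_successor[OF b n]
    by (auto simp: conj_commute)
qed

theorem theorem3p10:
  fixes d L n :: nat and P :: "nat \<Rightarrow> complex mat"
  assumes proj: "\<And>i. i \<in> {1..L} \<Longrightarrow> orth_proj d (P i)"
    and comm: "\<And>i j. i \<in> {1..L} \<Longrightarrow> j \<in> {1..L} \<Longrightarrow> P i * P j \<noteq> P j * P i \<Longrightarrow>
                 (i = j + 1 \<or> j = i + 1 \<or> {i, j} = {1, L})"
    and n: "1 < n" "n < L"
    and ker: "kernel d (opsum d P {1..L}) \<noteq> {0\<^sub>v d}"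
  shows "gap d (opsum d P {1..L}) \<ge>
           ereal (real n / (real n - 1)) *
             ((MIN k\<in>{1..L}. gap d (opsum d (\<lambda>i. P (cyc L i)) {k..n + k - 1})) - ereal (1 / real n))"
proof -
  have windows: "opsum d (\<lambda>i. P (cyc L i)) {k..n + k - 1} = opsum d P (cyc_window L n k)"
    if "k \<in> {1..L}" for k
    using opsum_reindex[OF inj_on_cyc_window[OF that n(2)]] cyc_image_window[OF that n(2)] by simp
  interpret projection_cover d n P "{1..L}" "{1..L}" "cyc_window L n"
  proof
    show "a \<in> {1..L} \<Longrightarrow> card {k \<in> {1..L}. a \<in> cyc_window L n k} = n" for a
      using n by (intro card_cyc_windows_containing) auto
    show "card {k \<in> {1..L}. a \<in> cyc_window L n k \<and> b \<in> cyc_window L n k} \<le> n - 1"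
      if "a \<in> {1..L}" "b \<in> {1..L}" "a \<noteq> b" for a b
      using that n by (intro card_cyc_windows_containing_pair_le) auto
    show "card {k \<in> {1..L}. a \<in> cyc_window L n k \<and> b \<in> cyc_window L n k} = n - 1"
      if "a \<in> {1..L}" "b \<in> {1..L}" "a \<noteq> b" "P a * P b \<noteq> P b * P a" for a b
      using that n comm by (intro card_cyc_windows_containing_neighbours) auto
  qed (use proj n in \<open>auto simp: cyc_window_def\<close>)
  have "ereal (real n / (real n - 1) * (\<gamma> - 1 / real n)) \<le> gap d (opsum d P {1..L})"
    if "ereal \<gamma> \<le> (MIN k\<in>{1..L}. gap d (opsum d (\<lambda>i. P (cyc L i)) {k..n + k - 1}))" for \<gamma>
    using n(1) by (rule gap_ge_windows) (use that in \<open>auto simp: windows[symmetric] intro: order_trans\<close>)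
  then show ?thesis using n by (intro ereal_mult_diff_le_if_real_bounds) auto
qed

end
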